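(* Consider a discrete-time time-invariant closed-loop system $\mathbf{x}_{t+1}=f(\mathbf{x}_t,\pi(\mathbf{x}_t))$ with states constrained to $\mathcal{X}\subseteq\mathbb{R}^{n_x}$ and a target set $\mathcal{X}_T$, and let $\mathcal{P}_t$ ($t\le 0$) be the true backprojection sets. If there is a set $\bar{\mathcal{P}}_{-1}$ with $\mathcal{P}_{-1}\subseteq\bar{\mathcal{P}}_{-1}$ (a BP over-approximation at time $t=-1$) such that $\bar{\mathcal{P}}_{-1}\subseteq\mathcal{X}_T$, then $\mathcal{X}_T$ contains all BP sets, i.e. $\mathcal{P}_t\subseteq\mathcal{X}_T$ for all $t\le 0$, so that $\mathcal{X}_T$ is an invariant set.
   Context: True backprojection sets: $\mathcal{P}_0=\mathcal{X}_T$ and, for $t<0$, $\mathcal{P}_t=\{\mathbf{x}\in\mathcal{X}\mid f(\mathbf{x},\pi(\mathbf{x}))\in\mathcal{P}_{t+1}\}$. *)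

theory Defs
  imports "HOL-Analysis.Analysis"
begin

text \<open>True backprojection sets. Time index t \<le> 0 is encoded as t = -k with k :: nat,
  so bp f ctrl X XT k is the set P_{-k}:
  P_0 = XT, P_{t} = {x \<in> X. f x (ctrl x) \<in> P_{t+1}}.\<close>
fun bp :: "('s \<Rightarrow> 'u \<Rightarrow> 's) \<Rightarrow> ('s \<Rightarrow> 'u) \<Rightarrow> 's set \<Rightarrow> 's set \<Rightarrow> nat \<Rightarrow> 's set" where
  "bp f ctrl X XT 0 = XT"
| "bp f ctrl X XT (Suc k) = {x \<in> X. f x (ctrl x) \<in> bp f ctrl X XT k}"

end

theory Submission
  imports Defs
begin

(* The one-step backprojection map P \<mapsto> {x \<in> X. f x (ctrl x) \<in> P} is monotone, so once
   P_{-1} \<subseteq> P_0 the backprojection sets form a decreasing chain starting at XT. *)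

lemma bp_Suc_subset:
  assumes "bp f ctrl X XT 1 \<subseteq> XT"
  shows "bp f ctrl X XT (Suc k) \<subseteq> bp f ctrl X XT k"
proof (induction k)
  case 0
  show ?case using assms by simp
next
  case (Suc k)
  then show ?case by auto
qed

lemma decseq_bp:
  assumes "bp f ctrl X XT 1 \<subseteq> XT"
  shows "decseq (bp f ctrl X XT)"
  using bp_Suc_subset[OF assms] by (rule decseq_SucI)

lemma bp_subset_target:
  assumes "bp f ctrl X XT 1 \<subseteq> XT"
  shows "bp f ctrl X XT k \<subseteq> XT"
  using decseq_bp[OF assms, THEN decseqD, of 0 k] by simp

theorem mainTheorem3:
  fixes f :: "real^'nx \<Rightarrow> real^'nu \<Rightarrow> real^'nx"
    and ctrl :: "real^'nx \<Rightarrow> real^'nu"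
    and X XT Pbar1 :: "(real^'nx) set"
  assumes "bp f ctrl X XT 1 \<subseteq> Pbar1"
    and "Pbar1 \<subseteq> XT"
  shows "\<forall>k::nat. bp f ctrl X XT k \<subseteq> XT"
  using bp_subset_target[of f ctrl X XT] assms by blast

end
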